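(* Let $\lambda\in P_+$ and let $x$ be a finite-dimensional nilpotent $\Lambda$-submodule of $q_\lambda$ (i.e. $x\in\Lambda^\lambda_\beta$ for some $\beta$, identified with a submodule of $q_\lambda$). Let $i,j\in I$ (not necessarily distinct) and let $y$ be a submodule of $q_\lambda$ containing $x$ with $y/x\cong s_j$. Then $$\varphi_i(y)-\varepsilon_i(y)=\varphi_i(x)-\varepsilon_i(x)-a_{ij}.$$
   Context: $\Gamma$ is a finite graph without loops with vertex set $I$; $a_{ii}=2$, and $-a_{ij}$ is the number of edges between $i\ne j$. $\Lambda$ is the preprojective algebra of $\Gamma$ over $\mathbb C$, $s_i$ the simple module at $i$, $q_i$ its injective hull. For a dominant integral weight $\lambda$ of the Kac–Moody algebra of $\Gamma$ (with simple roots $\alpha_i$ and symmetric form $(\alpha_i;\alpha_j)=a_{ij}$), $q_\lambda=\bigoplus_i q_i^{\oplus(\lambda;\alpha_i)}$. A finite-dimensional module is nilpotent if all its composition factors are among the $s_i$. For a submodule $x$ of $q_\lambda$: $\varepsilon_i(x)$ is the multiplicity of $s_i$ in the head (top) of $x$, and $\varphi_i(x)$ is the multiplicity of $s_i$ in the socle of $q_\lambda/x$. *)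

theory Defs
  imports Complex_Main "HOL-Library.Function_Algebras"
begin

(* Graph Gamma: vertex type 'i (finite), generalized Cartan matrix A :: 'i => 'i => int,
   A i i = 2, -A i j = number of edges between i and j (i ~= j). *)
definition is_graph_cartan :: "('i::{finite,linorder} \<Rightarrow> 'i \<Rightarrow> int) \<Rightarrow> bool" where
  "is_graph_cartan A \<longleftrightarrow> (\<forall>i. A i i = 2) \<and> (\<forall>i j. i \<noteq> j \<longrightarrow> A i j \<le> 0)
      \<and> (\<forall>i j. A i j = A j i)"

(* Arrows of the double quiver: (s, t, m) is the m-th arrow from s to t, m < number of edges. *)
type_synonym 'i arrow = "'i \<times> 'i \<times> nat"
type_synonym 'i path = "'i arrow list"

definition is_arrow :: "('i \<Rightarrow> 'i \<Rightarrow> int) \<Rightarrow> 'i arrow \<Rightarrow> bool" where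
  "is_arrow A b \<longleftrightarrow> (case b of (s, t, m) \<Rightarrow> s \<noteq> t \<and> m < nat (- A s t))"

definition src :: "'i arrow \<Rightarrow> 'i" where "src b = fst b"
definition tgt :: "'i arrow \<Rightarrow> 'i" where "tgt b = fst (snd b)"

definition rev_arrow :: "'i arrow \<Rightarrow> 'i arrow" where
  "rev_arrow b = (case b of (s, t, m) \<Rightarrow> (t, s, m))"

definition eps :: "'i::linorder arrow \<Rightarrow> complex" where
  "eps b = (if src b < tgt b then 1 else -1)"

definition arrows_from :: "('i \<Rightarrow> 'i \<Rightarrow> int) \<Rightarrow> 'i \<Rightarrow> 'i arrow set" where
  "arrows_from A v = {b. is_arrow A b \<and> src b = v}"

definition arrows_into :: "('i \<Rightarrow> 'i \<Rightarrow> int) \<Rightarrow> 'i \<Rightarrow> 'i arrow set" where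
  "arrows_into A v = {b. is_arrow A b \<and> tgt b = v}"

fun is_path :: "('i \<Rightarrow> 'i \<Rightarrow> int) \<Rightarrow> 'i \<Rightarrow> 'i \<Rightarrow> 'i path \<Rightarrow> bool" where
  "is_path A k l [] = (k = l)"
| "is_path A k l (b # p) = (src b = k \<and> is_arrow A b \<and> is_path A (tgt b) l p)"

(* The injective hull q_i of s_i (nilpotent Lambda-modules), as a representation:
   q_i(k) = graded dual of (paths from k to i modulo the preprojective relations),
   i.e. linear functionals on paths k -> i, vanishing on the two-sided ideal generated by
   the preprojective relations  sum_{b : src b = v} eps b * b b^*,  and vanishing on all
   paths of length > N for some N. *)
definition qhull :: "('i::{finite,linorder} \<Rightarrow> 'i \<Rightarrow> int) \<Rightarrow> 'i \<Rightarrow> 'i \<Rightarrow> ('i path \<Rightarrow> complex) set" where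
  "qhull A i k = {f. (\<forall>p. f p \<noteq> 0 \<longrightarrow> is_path A k i p)
                    \<and> (\<exists>N. \<forall>p. N < length p \<longrightarrow> f p = 0)
                    \<and> (\<forall>p v q. (\<Sum>b\<in>arrows_from A v. eps b * f (p @ [b, rev_arrow b] @ q)) = 0)}"

(* elements of q_lambda at vertex k: lam i = (lambda ; alpha_i) copies of q_i, indexed by (i, r) *)
type_synonym 'i qelem = "'i \<times> nat \<Rightarrow> 'i path \<Rightarrow> complex"

definition qlam :: "('i::{finite,linorder} \<Rightarrow> 'i \<Rightarrow> int) \<Rightarrow> ('i \<Rightarrow> nat) \<Rightarrow> 'i \<Rightarrow> 'i qelem set" where
  "qlam A lam k = {F. \<forall>i r. (r < lam i \<longrightarrow> F (i, r) \<in> qhull A i k) \<and> (\<not> r < lam i \<longrightarrow> F (i, r) = 0)}"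

definition act :: "'i arrow \<Rightarrow> 'i qelem \<Rightarrow> 'i qelem" where
  "act b F = (\<lambda>ir p. F ir (b # p))"

definition sc :: "complex \<Rightarrow> 'i qelem \<Rightarrow> 'i qelem" where
  "sc c F = (\<lambda>ir p. c * F ir p)"

abbreviation cdim :: "'i qelem set \<Rightarrow> nat" where
  "cdim \<equiv> vector_space.dim sc"

abbreviation cspan :: "'i qelem set \<Rightarrow> 'i qelem set" where
  "cspan \<equiv> module.span sc"

definition is_submodule :: "('i::{finite,linorder} \<Rightarrow> 'i \<Rightarrow> int) \<Rightarrow> ('i \<Rightarrow> nat) \<Rightarrow> ('i \<Rightarrow> 'i qelem set) \<Rightarrow> bool" where
  "is_submodule A lam X \<longleftrightarrow> (\<forall>k. X k \<subseteq> qlam A lam k \<and> module.subspace sc (X k))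
      \<and> (\<forall>b. is_arrow A b \<longrightarrow> act b ` X (src b) \<subseteq> X (tgt b))"

definition fin_dim_module :: "('i \<Rightarrow> 'i qelem set) \<Rightarrow> bool" where
  "fin_dim_module X \<longleftrightarrow> (\<forall>k. \<exists>B. finite B \<and> B \<subseteq> X k \<and> cspan B = X k)"

(* nilpotent: every composition factor is some s_i; for a finite-dimensional representation
   this is: some path length N such that all paths of length >= N act by zero *)
definition nilpotent_module :: "('i::{finite,linorder} \<Rightarrow> 'i \<Rightarrow> int) \<Rightarrow> ('i \<Rightarrow> 'i qelem set) \<Rightarrow> bool" where
  "nilpotent_module A X \<longleftrightarrow> (\<exists>N. \<forall>p k l. is_path A k l p \<and> N \<le> length p \<longrightarrow>
       (\<forall>F\<in>X k. fold act p F = 0))"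

(* epsilon_i(x): multiplicity of s_i in the head of x = dim x_i - dim (rad x)_i *)
definition epsi :: "('i \<Rightarrow> 'i \<Rightarrow> int) \<Rightarrow> ('i \<Rightarrow> 'i qelem set) \<Rightarrow> 'i \<Rightarrow> int" where
  "epsi A X i = int (cdim (X i)) - int (cdim (cspan (\<Union>b\<in>arrows_into A i. act b ` X (src b))))"

(* phi_i(x): multiplicity of s_i in the socle of q_lambda / x *)
definition phii :: "('i::{finite,linorder} \<Rightarrow> 'i \<Rightarrow> int) \<Rightarrow> ('i \<Rightarrow> nat) \<Rightarrow> ('i \<Rightarrow> 'i qelem set) \<Rightarrow> 'i \<Rightarrow> int" where
  "phii A lam X i = int (cdim {F \<in> qlam A lam i. \<forall>b\<in>arrows_from A i. act b F \<in> X (tgt b)})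
                    - int (cdim (X i))"

end

theory Submission
  imports Defs
begin

text \<open>
  Write \<open>S(Z)\<^sub>i\<close> for the \<open>i\<close>-component of the preimage in \<open>q\<^sub>\<lambda>\<close> of the socle of
  \<open>q\<^sub>\<lambda>/Z\<close> and \<open>R(Z)\<^sub>i\<close> for \<open>(rad Z)\<^sub>i\<close>, so that
  \<open>\<phi>\<^sub>i(Z) - \<epsilon>\<^sub>i(Z) = dim S(Z)\<^sub>i + dim R(Z)\<^sub>i - 2 dim Z\<^sub>i\<close>.  Passing from \<open>X\<close> to \<open>Y\<close>
  raises \<open>dim Z\<^sub>i\<close> by \<open>[i = j]\<close>, so it suffices to show that \<open>dim S\<^sub>i + dim R\<^sub>i\<close> grows by
  the number \<open>n = max 0 (-a\<^sub>i\<^sub>j)\<close> of arrows \<open>i \<rightarrow> j\<close> (there are none for \<open>i = j\<close>).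

  Pick \<open>v \<in> Y\<^sub>j\<close> and a functional \<open>l\<close> with \<open>l v = 1\<close> vanishing on \<open>X\<^sub>j\<close>.  The map
  \<open>\<theta> : S(Y)\<^sub>i \<rightarrow> \<complex>\<^sup>n\<close> reading off \<open>l\<close> on the images of \<open>F\<close> under the arrows \<open>a\<^sub>m : i \<rightarrow> j\<close>
  has kernel \<open>S(X)\<^sub>i\<close>, and \<open>g : \<complex>\<^sup>n \<rightarrow> q\<^sub>\<lambda>(i)\<close>, \<open>c \<mapsto> \<Sum> c\<^sub>m a\<^sub>m\<^sup>* v\<close>, satisfies
  \<open>span (R(X)\<^sub>i \<union> im g) = R(Y)\<^sub>i\<close>.  The preprojective relation at \<open>i\<close>, together with the
  injectivity of \<open>q\<^sub>\<lambda>\<close> (data along the arrows out of \<open>i\<close> obeying the relation glue to an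
  element at \<open>i\<close>), shows \<open>im \<theta> = g\<^sup>-\<^sup>1(R(X)\<^sub>i)\<close>.  Rank-nullity for \<open>\<theta>\<close> and a relative
  rank-nullity for \<open>g\<close> give the count.
\<close>

section \<open>Linear algebra without finite-dimensional ambient spaces\<close>

context vector_space
begin

lemma obtain_finite_basis:
  assumes "subspace V" "V \<subseteq> span S" "finite S"
  obtains B where "finite B" "B \<subseteq> V" "independent B" "span B = V" "card B = dim V"
proof -
  obtain B where B: "B \<subseteq> V" "independent B" "V \<subseteq> span B"
    using maximal_independent_subset[of V] by blast
  have "finite B"
    using independent_span_bound[OF assms(3) B(2)] B(1) assms(2) by auto
  moreover have "span B = V"
    using B assms(1) span_subspace by blast
  moreover have "card B = dim V"
    using basis_card_eq_dim B by blast
  ultimately show ?thesis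
    using that B by blast
qed

lemma independent_Un_modulo_span:
  assumes T: "independent T" "finite T" and G: "finite G"
    and G_indep: "\<And>c. (\<Sum>g\<in>G. c g *s g) \<in> span T \<Longrightarrow> \<forall>g\<in>G. c g = 0"
  shows "independent (T \<union> G)" and "T \<inter> G = {}"
proof -
  show disjoint: "T \<inter> G = {}"
  proof (rule ccontr)
    assume "T \<inter> G \<noteq> {}"
    then obtain g where g: "g \<in> T" "g \<in> G" by blast
    have "(\<Sum>h\<in>G. (if h = g then 1 else 0) *s h) = (\<Sum>h\<in>G. if h = g then h else 0)"
      by (rule sum.cong) auto
    also have "\<dots> = g"
      using G g by simp
    finally show False
      using G_indep[of "\<lambda>h. if h = g then 1 else 0"] g span_base by force
  qed
  show "independent (T \<union> G)"
  proof (rule independent_if_scalars_zero)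
    show "finite (T \<union> G)"
      using T G by blast
    fix f x
    assume sum0: "(\<Sum>x\<in>T \<union> G. f x *s x) = 0" and x: "x \<in> T \<union> G"
    have split: "(\<Sum>x\<in>T. f x *s x) + (\<Sum>x\<in>G. f x *s x) = 0"
      using sum0 by (simp add: sum.union_disjoint[OF T(2) G disjoint])
    then have "(\<Sum>x\<in>G. f x *s x) = - (\<Sum>x\<in>T. f x *s x)"
      by (simp add: eq_neg_iff_add_eq_0 add.commute)
    also have "\<dots> \<in> span T"
      by (intro span_neg span_sum span_scale span_base)
    finally have "\<forall>g\<in>G. f g = 0"
      by (rule G_indep)
    with split have "(\<Sum>x\<in>T. f x *s x) = 0"
      by simp
    with \<open>\<forall>g\<in>G. f g = 0\<close> x show "f x = 0"
      using independentD[OF T(1) T(2) order_refl] by blast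
  qed
qed

lemma span_Int_span_disjoint_subsets:
  assumes "independent B" "finite B" "B1 \<subseteq> B" "B2 \<subseteq> B" "B1 \<inter> B2 = {}"
    and "x \<in> span B1" "x \<in> span B2"
  shows "x = 0"
proof -
  have fin: "finite B1" "finite B2"
    using assms(2-4) finite_subset by blast+
  obtain a where a: "x = (\<Sum>b\<in>B1. a b *s b)"
    using span_finite[OF fin(1)] assms(6) by blast
  obtain c where c: "x = (\<Sum>b\<in>B2. c b *s b)"
    using span_finite[OF fin(2)] assms(7) by blast
  define u where "u b = (if b \<in> B1 then a b else - c b)" for b
  have "(\<Sum>b\<in>B1. u b *s b) = x"
    using a by (simp add: u_def)
  moreover have "(\<Sum>b\<in>B2. u b *s b) = - x"
    using c assms(5) by (auto simp: u_def sum_negf[symmetric] intro!: sum.cong)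
  ultimately have "(\<Sum>b\<in>B1 \<union> B2. u b *s b) = 0"
    using assms(5) fin by (simp add: sum.union_disjoint)
  then have "\<forall>b\<in>B1. a b = 0"
    using independentD[OF assms(1), of "B1 \<union> B2" u] fin assms(3,4) by (force simp: u_def)
  then show ?thesis
    using a by simp
qed

lemma codim_one_decomposition:
  assumes X: "subspace X" "X \<subseteq> span S" "finite S" and XY: "X \<subseteq> Y"
    and dim: "dim Y = dim X + 1" and v: "v \<in> Y" "v \<notin> X" and y: "y \<in> Y"
  obtains k where "y - k *s v \<in> X"
proof -
  obtain BX where BX: "finite BX" "BX \<subseteq> X" "independent BX" "span BX = X" "card BX = dim X"
    using obtain_finite_basis[OF X] by blast
  have indep: "independent (insert v BX)"
    using independent_insertI[OF _ BX(3)] v(2) BX(4) by simp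
  have "y \<in> span (insert v BX)"
  proof (rule ccontr)
    assume y_notin: "y \<notin> span (insert v BX)"
    obtain BY where BY: "BY \<subseteq> Y" "independent BY" "Y \<subseteq> span BY" "card BY = dim Y"
      using basis_exists[of Y] by blast
    have "finite BY"
      using BY(4) dim card_ge_0_finite by force
    moreover have "independent (insert y (insert v BX))"
      using independent_insertI[OF y_notin indep] .
    moreover have "insert y (insert v BX) \<subseteq> span BY"
      using y v(1) BX(2) XY BY(3) by blast
    ultimately have "card (insert y (insert v BX)) \<le> card BY"
      using independent_span_bound by blast
    moreover have "v \<notin> BX" "y \<notin> insert v BX"
      using v(2) BX(2) y_notin span_base by blast+
    ultimately show False
      using BX(1,5) BY(4) dim by simp
  qed
  then show ?thesis
    using that BX(4) span_insert by blast
qed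

lemma obtain_functional_codim_one:
  assumes X: "subspace X" "X \<subseteq> span S" "finite S" and XY: "X \<subseteq> Y"
    and dim: "dim Y = dim X + 1"
  obtains v l where "v \<in> Y" "Vector_Spaces.linear scale (*) l" "\<forall>x\<in>X. l x = 0" "l v = 1"
    "\<forall>y\<in>Y. y - l y *s v \<in> X"
proof -
  interpret F: vector_space_pair scale "(*) :: 'a \<Rightarrow> 'a \<Rightarrow> 'a"
    by unfold_locales (auto simp: algebra_simps)
  obtain BX where BX: "BX \<subseteq> X" "independent BX" "span BX = X"
    using obtain_finite_basis[OF X] by metis
  obtain v where v: "v \<in> Y" "v \<notin> X"
    using XY dim by (metis add_cancel_left_right subsetI subset_antisym zero_neq_one)
  have "independent (insert v BX)"
    using independent_insertI[OF _ BX(2)] v(2) BX(3) by simp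
  from F.linear_independent_extend[OF this, of "\<lambda>x. if x = v then 1 else 0"]
  obtain l where l: "Vector_Spaces.linear scale (*) l"
      "\<forall>x\<in>insert v BX. l x = (if x = v then 1 else 0)"
    by blast
  have "\<forall>b\<in>BX. l b = 0"
    using l(2) v(2) BX(1) by auto
  then have l_X: "\<forall>x\<in>X. l x = 0"
    using F.linear_eq_0_on_span[OF l(1)] BX(3) by blast
  have "y - l y *s v \<in> X" if y: "y \<in> Y" for y
  proof -
    obtain k where k: "y - k *s v \<in> X"
      using codim_one_decomposition[OF X XY dim v y] .
    then have "l y - k * l v = 0"
      using l_X F.linear_diff[OF l(1)] F.linear_scale[OF l(1)] by fastforce
    then show ?thesis
      using k l(2) by simp
  qed
  then show ?thesis
    using that v(1) l l_X by simp
qed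

lemma span_UN_subspaces_obtain_sum:
  assumes "finite B" "\<forall>b\<in>B. subspace (V b)" "y \<in> span (\<Union>b\<in>B. V b)"
  shows "\<exists>x. (\<forall>b\<in>B. x b \<in> V b) \<and> y = (\<Sum>b\<in>B. x b)"
  using assms
proof (induction B arbitrary: y rule: finite_induct)
  case empty
  then show ?case by simp
next
  case (insert a B)
  obtain u w where uw: "y = u + w" "u \<in> span (V a)" "w \<in> span (\<Union>b\<in>B. V b)"
    using insert.prems(2) span_Un[of "V a" "\<Union>b\<in>B. V b"] by auto
  obtain x where x: "\<forall>b\<in>B. x b \<in> V b" "w = (\<Sum>b\<in>B. x b)"
    using insert.IH[OF _ uw(3)] insert.prems(1) by blast
  have "u \<in> V a"
    using uw(2) insert.prems(1) span_eq_iff by blast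
  moreover have "(\<Sum>b\<in>B. (x(a := u)) b) = w"
    using insert.hyps(2) x(2) by (auto intro: sum.cong)
  ultimately show ?case
    using insert.hyps x(1) uw(1) by (intro exI[of _ "x(a := u)"]) auto
qed

end

context vector_space_pair
begin

lemma independent_Un_image_complement:
  assumes g: "Vector_Spaces.linear s1 s2 g" and R: "vs2.subspace R"
    and T: "vs2.independent T" "finite T" "vs2.span T = R"
    and BC: "vs1.independent BC" "finite BC"
    and BW: "BW \<subseteq> BC" "vs1.span BW = {c \<in> vs1.span BC. g c \<in> R}"
  shows "inj_on g (BC - BW)" and "vs2.independent (T \<union> g ` (BC - BW))"
    and "T \<inter> g ` (BC - BW) = {}"
proof -
  have D: "finite (BC - BW)" "vs1.independent (BC - BW)"
    using BC vs1.independent_mono by auto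
  have preimage_Int_span_D: "w = 0" if "w \<in> vs1.span (BC - BW)" "g w \<in> R" for w
  proof -
    have "w \<in> vs1.span BW"
      using that BW(2) vs1.span_mono[of "BC - BW" BC] by auto
    then show ?thesis
      using vs1.span_Int_span_disjoint_subsets[OF BC(1,2) _ BW(1)] that(1) by blast
  qed
  show inj: "inj_on g (BC - BW)"
  proof (rule inj_onI)
    fix d1 d2
    assume d: "d1 \<in> BC - BW" "d2 \<in> BC - BW" "g d1 = g d2"
    then have "d1 - d2 \<in> vs1.span (BC - BW)" "g (d1 - d2) \<in> R"
      using linear_diff[OF g] vs2.subspace_0[OF R] by (auto intro: vs1.span_diff vs1.span_base)
    then show "d1 = d2"
      using preimage_Int_span_D by force
  qed
  have modulo_T: "\<forall>y\<in>g ` (BC - BW). c y = 0"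
    if "(\<Sum>y\<in>g ` (BC - BW). c y *b y) \<in> vs2.span T" for c
  proof -
    let ?w = "\<Sum>d\<in>BC - BW. c (g d) *a d"
    have "g ?w = (\<Sum>y\<in>g ` (BC - BW). c y *b y)"
      by (simp add: linear_sum[OF g] linear_scale[OF g] sum.reindex[OF inj])
    moreover have "?w \<in> vs1.span (BC - BW)"
      by (intro vs1.span_sum vs1.span_scale vs1.span_base)
    ultimately have "?w = 0"
      using that T(3) preimage_Int_span_D by simp
    then show ?thesis
      using vs1.independentD[OF D(2) D(1) order_refl, of "c \<circ> g"] by auto
  qed
  show "vs2.independent (T \<union> g ` (BC - BW))" "T \<inter> g ` (BC - BW) = {}"
    using vs2.independent_Un_modulo_span[OF T(1,2) finite_imageI[OF D(1)] modulo_T] by blast+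
qed

lemma span_Un_image_eq_span_Un_image_complement:
  assumes g: "Vector_Spaces.linear s1 s2 g"
    and "vs2.span T = R" "vs1.span BC = C" "BW \<subseteq> BC" "g ` BW \<subseteq> R"
  shows "vs2.span (R \<union> g ` C) = vs2.span (T \<union> g ` (BC - BW))"
proof
  let ?D = "BC - BW"
  have "R \<subseteq> vs2.span (T \<union> g ` ?D)"
    unfolding assms(2)[symmetric] by (rule vs2.span_mono) (rule Un_upper1)
  moreover have "g ` ?D \<subseteq> vs2.span (T \<union> g ` ?D)"
    using vs2.span_superset[of "T \<union> g ` ?D"] by (rule subset_trans[rotated]) (rule Un_upper2)
  ultimately have R_gD: "R \<union> g ` ?D \<subseteq> vs2.span (T \<union> g ` ?D)"
    by (rule Un_least)
  have "g ` BC \<subseteq> R \<union> g ` ?D"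
    using assms(5) by blast
  then have "vs2.span (g ` BC) \<subseteq> vs2.span (T \<union> g ` ?D)"
    by (intro vs2.span_minimal[OF _ vs2.subspace_span] subset_trans[OF _ R_gD])
  then have "g ` C \<subseteq> vs2.span (T \<union> g ` ?D)"
    using linear_span_image[OF g] assms(3) by simp
  with R_gD show "vs2.span (R \<union> g ` C) \<subseteq> vs2.span (T \<union> g ` ?D)"
    by (intro vs2.span_minimal[OF _ vs2.subspace_span] Un_least) auto
  have "T \<subseteq> R" "?D \<subseteq> C"
    using assms(2,3) vs2.span_superset[of T] vs1.span_superset[of BC] by auto
  then show "vs2.span (T \<union> g ` ?D) \<subseteq> vs2.span (R \<union> g ` C)"
    by (intro vs2.span_mono Un_mono image_mono)
qed

lemma dim_span_Un_image_add_dim_preimage: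
  assumes g: "Vector_Spaces.linear s1 s2 g"
    and C: "vs1.subspace C" "C \<subseteq> vs1.span C0" "finite C0"
    and R: "vs2.subspace R" "R \<subseteq> vs2.span R0" "finite R0"
  shows "vs2.dim (vs2.span (R \<union> g ` C)) + vs1.dim {c\<in>C. g c \<in> R} = vs2.dim R + vs1.dim C"
proof -
  define W where "W = {c\<in>C. g c \<in> R}"
  have W: "vs1.subspace W" "W \<subseteq> C"
    using vs1.subspace_inter[OF C(1) linear_subspace_linear_preimage[OF g R(1)]]
    by (auto simp: W_def Int_def)
  obtain BW where BW: "finite BW" "BW \<subseteq> W" "vs1.independent BW" "vs1.span BW = W"
      "card BW = vs1.dim W"
    using vs1.obtain_finite_basis[OF W(1) _ C(3)] W(2) C(2) by blast
  obtain BC where BC: "BW \<subseteq> BC" "BC \<subseteq> C" "vs1.independent BC" "C \<subseteq> vs1.span BC"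
    using vs1.maximal_independent_subset_extend[of BW C] BW(2,3) W(2) by blast
  have BC_fin: "finite BC" and BC_span: "vs1.span BC = C" and BC_card: "card BC = vs1.dim C"
    using vs1.independent_span_bound[OF C(3) BC(3)] BC C vs1.span_subspace vs1.basis_card_eq_dim
    by blast+
  obtain T where T: "finite T" "T \<subseteq> R" "vs2.independent T" "vs2.span T = R" "card T = vs2.dim R"
    using vs2.obtain_finite_basis[OF R] by blast
  have "vs1.span BW = {c \<in> vs1.span BC. g c \<in> R}"
    using BW(4) BC_span by (simp add: W_def)
  note complement = independent_Un_image_complement[OF g R(1) T(3,1,4) BC(3) BC_fin BC(1) this]
  have "g ` BW \<subseteq> R"
    using BW(2) by (auto simp: W_def)
  then have "vs2.dim (vs2.span (R \<union> g ` C)) = card T + card (BC - BW)"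
    using span_Un_image_eq_span_Un_image_complement[OF g T(4) BC_span BC(1)]
      complement T(1) BC_fin card_image[OF complement(1)]
    by (simp add: vs2.dim_eq_card_independent card_Un_disjoint)
  then show ?thesis
    using T(5) BC_card BW(1,5) BC(1) card_mono[OF BC_fin BC(1)]
    by (simp add: W_def card_Diff_subset)
qed

lemma dim_image_add_dim_kernel:
  assumes g: "Vector_Spaces.linear s1 s2 g"
    and C: "vs1.subspace C" "C \<subseteq> vs1.span C0" "finite C0"
  shows "vs2.dim (g ` C) + vs1.dim {c\<in>C. g c = 0} = vs1.dim C"
proof -
  have "vs2.dim {0} = 0"
    using vs2.dim_span[of "{}"] vs2.dim_eq_card_independent[OF vs2.independent_empty] by simp
  then show ?thesis
    using dim_span_Un_image_add_dim_preimage[OF g C vs2.subspace_single_0, of "{}"] by simp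
qed

end

section \<open>The double quiver\<close>

lemma sum_fun_apply: "(\<Sum>x\<in>S. f x) a = (\<Sum>x\<in>S. f x a)"
  by (induction S rule: infinite_finite_induct) auto

lemma finite_arrows: "finite {b. is_arrow (A :: 'i::finite \<Rightarrow> 'i \<Rightarrow> int) b}"
proof (rule finite_subset)
  show "{b. is_arrow A b} \<subseteq> (SIGMA s:UNIV. SIGMA t:UNIV. {..<nat (- A s t)})"
    by (auto simp: is_arrow_def)
qed auto

lemma finite_arrows_from: "finite (arrows_from (A :: 'i::finite \<Rightarrow> 'i \<Rightarrow> int) i)"
  using finite_arrows by (rule finite_subset[rotated]) (auto simp: arrows_from_def)

lemma finite_arrows_into: "finite (arrows_into (A :: 'i::finite \<Rightarrow> 'i \<Rightarrow> int) i)"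
  using finite_arrows by (rule finite_subset[rotated]) (auto simp: arrows_into_def)

lemma rev_arrow_rev_arrow [simp]: "rev_arrow (rev_arrow b) = b"
  by (cases b) (simp add: rev_arrow_def)

lemma rev_arrow_eq_iff [simp]: "rev_arrow a = rev_arrow b \<longleftrightarrow> a = b"
  by (metis rev_arrow_rev_arrow)

lemma arrow_simps [simp]:
  "src (s, t, m) = s" "tgt (s, t, m) = t" "rev_arrow (s, t, m) = (t, s, m)"
  by (simp_all add: src_def tgt_def rev_arrow_def)

lemma src_rev_arrow [simp]: "src (rev_arrow b) = tgt b"
  and tgt_rev_arrow [simp]: "tgt (rev_arrow b) = src b"
  by (cases b, simp add: rev_arrow_def src_def tgt_def)+

lemma eps_mult_eps [simp]: "eps b * eps b = 1"
  and eps_nonzero [simp]: "eps b \<noteq> 0"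
  by (simp_all add: eps_def)

lemma is_arrow_rev_arrow: "is_graph_cartan A \<Longrightarrow> is_arrow A (rev_arrow b) \<longleftrightarrow> is_arrow A b"
  by (cases b) (auto simp: is_graph_cartan_def is_arrow_def rev_arrow_def)

lemma rev_arrow_image_arrows_from:
  assumes "is_graph_cartan A"
  shows "rev_arrow ` arrows_from A i = arrows_into A i"
proof -
  have "b \<in> arrows_into A i \<longleftrightarrow> rev_arrow b \<in> arrows_from A i" for b
    using is_arrow_rev_arrow[OF assms, of b] by (auto simp: arrows_from_def arrows_into_def)
  moreover have "b \<in> rev_arrow ` arrows_from A i \<longleftrightarrow> rev_arrow b \<in> arrows_from A i" for b
    by (metis image_iff rev_arrow_rev_arrow)
  ultimately show ?thesis
    by blast
qed

lemma rev_arrow_mem_arrows_into: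
  "is_graph_cartan A \<Longrightarrow> b \<in> arrows_from A i \<Longrightarrow> rev_arrow b \<in> arrows_into A i"
  by (simp add: arrows_from_def arrows_into_def is_arrow_rev_arrow)

lemma rev_arrow_mem_arrows_from:
  "is_graph_cartan A \<Longrightarrow> b \<in> arrows_into A i \<Longrightarrow> rev_arrow b \<in> arrows_from A i"
  by (simp add: arrows_from_def arrows_into_def is_arrow_rev_arrow)

lemma sum_arrows_into:
  assumes "is_graph_cartan A"
  shows "(\<Sum>b\<in>arrows_into A i. f b) = (\<Sum>b\<in>arrows_from A i. f (rev_arrow b))"
  by (simp add: rev_arrow_image_arrows_from[OF assms, symmetric] sum.reindex inj_on_def)

lemma arrows_from_to:
  assumes "is_graph_cartan A"
  shows "{b\<in>arrows_from A i. tgt b = j} = (\<lambda>m. (i, j, m)) ` {..<nat (- A i j)}"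
  using assms
  by (cases "i = j") (auto simp: arrows_from_def is_arrow_def src_def tgt_def is_graph_cartan_def)

lemma sum_arrows_from_to:
  assumes "is_graph_cartan A"
  shows "(\<Sum>b\<in>{b\<in>arrows_from A i. tgt b = j}. f b) = (\<Sum>m<nat (- A i j). f (i, j, m))"
  unfolding arrows_from_to[OF assms] by (simp add: sum.reindex inj_on_def)

section \<open>The modules \<open>q\<^sub>\<lambda>\<close>\<close>

interpretation Q: vector_space "sc :: complex \<Rightarrow> 'i qelem \<Rightarrow> 'i qelem"
  by unfold_locales (auto simp: sc_def fun_eq_iff algebra_simps)

interpretation QQ: vector_space_pair "sc :: complex \<Rightarrow> 'i qelem \<Rightarrow> 'i qelem" sc ..

interpretation QC: vector_space_pair "sc :: complex \<Rightarrow> 'i qelem \<Rightarrow> 'i qelem" "(*) :: complex \<Rightarrow> _"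
  by unfold_locales (auto simp: algebra_simps)

lemma sc_apply [simp]: "sc c F ir p = c * F ir p"
  by (simp add: sc_def)

lemma act_apply [simp]: "act b F ir p = F ir (b # p)"
  by (simp add: act_def)

lemma linear_act: "Vector_Spaces.linear sc sc (act b)"
  by (auto simp: Vector_Spaces.linear_iff fun_eq_iff intro: Q.vector_space_axioms)

lemmas act_add = QQ.linear_add[OF linear_act]
  and act_diff = QQ.linear_diff[OF linear_act]
  and act_sc = QQ.linear_scale[OF linear_act]
  and act_zero = QQ.linear_0[OF linear_act]

lemma qhull_add:
  assumes F: "F \<in> qhull A i k" and G: "G \<in> qhull A i k"
  shows "F + G \<in> qhull A i k"
  unfolding qhull_def mem_Collect_eq
proof (intro conjI allI impI)
  fix p
  assume "(F + G) p \<noteq> 0"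
  then have "F p \<noteq> 0 \<or> G p \<noteq> 0"
    by auto
  then show "is_path A k i p"
    using F G by (auto simp: qhull_def)
next
  obtain N1 N2 where "\<forall>p. N1 < length p \<longrightarrow> F p = 0" "\<forall>p. N2 < length p \<longrightarrow> G p = 0"
    using F G by (auto simp: qhull_def)
  then show "\<exists>N. \<forall>p. N < length p \<longrightarrow> (F + G) p = 0"
    by (intro exI[of _ "max N1 N2"]) simp
next
  fix p v q
  show "(\<Sum>b\<in>arrows_from A v. eps b * (F + G) (p @ [b, rev_arrow b] @ q)) = 0"
    using F G by (simp add: qhull_def distrib_left sum.distrib)
qed

lemma qhull_scale:
  assumes F: "F \<in> qhull A i k"
  shows "(\<lambda>p. c * F p) \<in> qhull A i k"
  unfolding qhull_def mem_Collect_eq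
proof (intro conjI allI impI)
  fix p
  assume "c * F p \<noteq> 0"
  then show "is_path A k i p"
    using F by (simp add: qhull_def)
next
  obtain N where "\<forall>p. N < length p \<longrightarrow> F p = 0"
    using F by (auto simp: qhull_def)
  then show "\<exists>N. \<forall>p. N < length p \<longrightarrow> c * F p = 0"
    by auto
next
  fix p v q
  have "(\<Sum>b\<in>arrows_from A v. eps b * (c * F (p @ [b, rev_arrow b] @ q)))
      = c * (\<Sum>b\<in>arrows_from A v. eps b * F (p @ [b, rev_arrow b] @ q))"
    unfolding sum_distrib_left by (intro sum.cong refl mult.left_commute)
  then show "(\<Sum>b\<in>arrows_from A v. eps b * (c * F (p @ [b, rev_arrow b] @ q))) = 0"
    using F by (simp add: qhull_def)
qed

lemma subspace_qlam: "Q.subspace (qlam A lam k)"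
proof -
  have "(\<lambda>_. 0) \<in> qhull A i k" for i
    by (auto simp: qhull_def)
  then show ?thesis
    by (auto simp: Q.subspace_def qlam_def zero_fun_def sc_def intro: qhull_add qhull_scale)
qed

lemma preprojective_relation:
  fixes A :: "'i::{finite,linorder} \<Rightarrow> 'i \<Rightarrow> int"
  assumes "F \<in> qlam A lam i"
  shows "(\<Sum>b\<in>arrows_from A i. sc (eps b) (act (rev_arrow b) (act b F))) = 0"
proof (intro ext)
  fix ir :: "'i \<times> nat" and q
  obtain i' r where ir: "ir = (i', r)"
    by (cases ir)
  have "(\<Sum>b\<in>arrows_from A i. eps b * F (i', r) ([] @ [b, rev_arrow b] @ q)) = 0"
  proof (cases "r < lam i'")
    case True
    then have "F (i', r) \<in> qhull A i' i"
      using assms by (simp add: qlam_def)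
    then have "\<forall>p v q. (\<Sum>b\<in>arrows_from A v. eps b * F (i', r) (p @ [b, rev_arrow b] @ q)) = 0"
      by (simp add: qhull_def)
    then show ?thesis
      by blast
  next
    case False
    then show ?thesis
      using assms by (simp add: qlam_def)
  qed
  then show "(\<Sum>b\<in>arrows_from A i. sc (eps b) (act (rev_arrow b) (act b F))) ir q = 0 ir q"
    by (simp add: sum_fun_apply ir)
qed

lemma qlam_support:
  assumes "F \<in> qlam A lam k" "F (i, r) p \<noteq> 0"
  shows "r < lam i" and "is_path A k i p"
proof -
  show r: "r < lam i"
  proof (rule ccontr)
    assume "\<not> r < lam i"
    then have "F (i, r) = 0"
      using assms(1) by (simp add: qlam_def)
    then show False
      using assms(2) by simp
  qed
  then have "F (i, r) \<in> qhull A i k"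
    using assms(1) by (simp add: qlam_def)
  then show "is_path A k i p"
    using assms(2) by (simp add: qhull_def)
qed

definition prepend_arrows ::
    "'i arrow set \<Rightarrow> ('i arrow \<Rightarrow> 'i path \<Rightarrow> complex) \<Rightarrow> 'i path \<Rightarrow> complex" where
  "prepend_arrows B H p = (case p of [] \<Rightarrow> 0 | b # q \<Rightarrow> if b \<in> B then H b q else 0)"

lemma prepend_arrows_simps [simp]:
  "prepend_arrows B H [] = 0"
  "prepend_arrows B H (b # q) = (if b \<in> B then H b q else 0)"
  by (simp_all add: prepend_arrows_def)

lemma prepend_arrows_vanishing:
  assumes "finite B" "\<forall>b\<in>B. \<exists>N. \<forall>p. N < length p \<longrightarrow> H b p = 0"
  shows "\<exists>N. \<forall>p. N < length p \<longrightarrow> prepend_arrows B H p = 0"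
proof -
  obtain N where N: "\<forall>b\<in>B. \<forall>p. N b < length p \<longrightarrow> H b p = 0"
    using assms(2) by (auto dest!: bchoice)
  have "N b \<le> (\<Sum>b\<in>B. N b)" if "b \<in> B" for b
    using that assms(1) by (intro member_le_sum) auto
  then have "prepend_arrows B H (b # q) = 0" if "Suc (\<Sum>b\<in>B. N b) < length (b # q)" for b q
    using that N by fastforce
  then show ?thesis
    by (metis list.exhaust prepend_arrows_simps(1))
qed

lemma qhull_prepend_arrows:
  fixes A :: "'i::{finite,linorder} \<Rightarrow> 'i \<Rightarrow> int"
  assumes H: "\<forall>b\<in>arrows_from A i. H b \<in> qhull A k (tgt b)"
    and rel: "\<forall>q. (\<Sum>b\<in>arrows_from A i. eps b * H b (rev_arrow b # q)) = 0"
  shows "prepend_arrows (arrows_from A i) H \<in> qhull A k i"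
  unfolding qhull_def mem_Collect_eq
proof (intro conjI allI impI)
  fix p
  assume "prepend_arrows (arrows_from A i) H p \<noteq> 0"
  then obtain b q where p: "p = b # q" and b: "b \<in> arrows_from A i" and "H b q \<noteq> 0"
    by (cases p) (auto split: if_splits)
  then have "is_path A (tgt b) k q"
    using H by (auto simp: qhull_def)
  then show "is_path A i k p"
    using p b by (simp add: arrows_from_def)
next
  have "\<forall>b\<in>arrows_from A i. \<exists>N. \<forall>p. N < length p \<longrightarrow> H b p = 0"
    using H by (simp add: qhull_def)
  then show "\<exists>N. \<forall>p. N < length p \<longrightarrow> prepend_arrows (arrows_from A i) H p = 0"
    by (rule prepend_arrows_vanishing[OF finite_arrows_from])
next
  fix p v q
  show "(\<Sum>b\<in>arrows_from A v.
      eps b * prepend_arrows (arrows_from A i) H (p @ [b, rev_arrow b] @ q)) = 0"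
  proof (cases p)
    case Nil
    have "b \<notin> arrows_from A i" if "b \<in> arrows_from A v" "v \<noteq> i" for b
      using that by (auto simp: arrows_from_def)
    then show ?thesis
      using Nil rel by (cases "v = i") (auto intro!: sum.neutral)
  next
    case (Cons b0 p')
    show ?thesis
    proof (cases "b0 \<in> arrows_from A i")
      case True
      then show ?thesis
        using Cons H by (simp add: qhull_def)
    next
      case False
      then show ?thesis
        using Cons by simp
    qed
  qed
qed

definition lift_arrow :: "'i arrow \<Rightarrow> 'i qelem \<Rightarrow> 'i qelem" where
  "lift_arrow b G = (\<lambda>ir. prepend_arrows {b} (\<lambda>_. G ir))"

definition socle_gen :: "'i \<Rightarrow> nat \<Rightarrow> 'i qelem" where
  "socle_gen i r = (\<lambda>ir p. if ir = (i, r) \<and> p = [] then 1 else 0)"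

lemma linear_lift_arrow: "Vector_Spaces.linear sc sc (lift_arrow b)"
  by (auto simp: Vector_Spaces.linear_iff fun_eq_iff lift_arrow_def prepend_arrows_def
      intro: Q.vector_space_axioms split: list.split)

lemma sum_lift_arrow_apply:
  assumes "finite B"
  shows "(\<Sum>b\<in>B. lift_arrow b (h b)) ir = prepend_arrows B (\<lambda>b. h b ir)"
proof
  fix p
  show "(\<Sum>b\<in>B. lift_arrow b (h b)) ir p = prepend_arrows B (\<lambda>b. h b ir) p"
    using assms by (cases p) (simp_all add: sum_fun_apply lift_arrow_def if_distrib cong: if_cong)
qed

lemma act_sum_lift_arrow:
  assumes "finite B" "b \<in> B"
  shows "act b (\<Sum>b\<in>B. lift_arrow b (h b)) = h b"
  using assms by (simp add: fun_eq_iff sum_lift_arrow_apply)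

lemma qlam_decomposition:
  fixes A :: "'i::{finite,linorder} \<Rightarrow> 'i \<Rightarrow> int"
  assumes F: "F \<in> qlam A lam i"
  shows "F = (\<Sum>r<lam i. sc (F (i, r) []) (socle_gen i r))
      + (\<Sum>b\<in>arrows_from A i. lift_arrow b (act b F))"
proof (intro ext)
  fix ir :: "'i \<times> nat" and p
  obtain i' r' where ir: "ir = (i', r')"
    by (cases ir)
  have socle_part: "(\<Sum>r<lam i. sc (F (i, r) []) (socle_gen i r)) ir p
      = (if i' = i \<and> r' < lam i \<and> p = [] then F ir [] else 0)"
    using ir by (auto simp: sum_fun_apply socle_gen_def if_distrib[of "(*) _"] cong: if_cong)
  have lift_part: "(\<Sum>b\<in>arrows_from A i. lift_arrow b (act b F)) ir p
      = prepend_arrows (arrows_from A i) (\<lambda>b. act b F ir) p"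
    by (simp add: sum_lift_arrow_apply finite_arrows_from)
  show "F ir p = ((\<Sum>r<lam i. sc (F (i, r) []) (socle_gen i r))
      + (\<Sum>b\<in>arrows_from A i. lift_arrow b (act b F))) ir p"
    unfolding plus_fun_apply socle_part lift_part
    using qlam_support[OF F, of i' r' p] ir by (cases p) (auto simp: arrows_from_def)
qed

text \<open>Injectivity of \<open>q\<^sub>\<lambda>\<close>: data along the arrows out of \<open>i\<close> satisfying the
  preprojective relation glue to an element at \<open>i\<close>.\<close>

lemma sum_lift_arrow_in_qlam:
  fixes A :: "'i::{finite,linorder} \<Rightarrow> 'i \<Rightarrow> int"
  assumes h: "\<forall>b\<in>arrows_from A i. h b \<in> qlam A lam (tgt b)"
    and rel: "(\<Sum>b\<in>arrows_from A i. sc (eps b) (act (rev_arrow b) (h b))) = 0"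
  shows "(\<Sum>b\<in>arrows_from A i. lift_arrow b (h b)) \<in> qlam A lam i"
  unfolding qlam_def mem_Collect_eq sum_lift_arrow_apply[OF finite_arrows_from]
proof (intro allI conjI impI)
  fix i' r
  assume r: "r < lam i'"
  have "(\<Sum>b\<in>arrows_from A i. eps b * h b (i', r) (rev_arrow b # q)) = 0" for q
    using fun_cong[OF fun_cong[OF rel, of "(i', r)"], of q] by (simp add: sum_fun_apply)
  then show "prepend_arrows (arrows_from A i) (\<lambda>b. h b (i', r)) \<in> qhull A i' i"
    using h r by (intro qhull_prepend_arrows) (auto simp: qlam_def)
next
  fix i' r
  assume "\<not> r < lam i'"
  then show "prepend_arrows (arrows_from A i) (\<lambda>b. h b (i', r)) = 0"
    using h by (auto simp: qlam_def prepend_arrows_def fun_eq_iff split: list.split)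
qed

section \<open>Socle preimages and radicals\<close>

definition socle_preimage :: "('i::{finite,linorder} \<Rightarrow> 'i \<Rightarrow> int) \<Rightarrow> ('i \<Rightarrow> nat) \<Rightarrow>
    ('i \<Rightarrow> 'i qelem set) \<Rightarrow> 'i \<Rightarrow> 'i qelem set"
  where "socle_preimage A lam Z i =
    {F \<in> qlam A lam i. \<forall>b\<in>arrows_from A i. act b F \<in> Z (tgt b)}"

definition radical :: "('i \<Rightarrow> 'i \<Rightarrow> int) \<Rightarrow> ('i \<Rightarrow> 'i qelem set) \<Rightarrow> 'i \<Rightarrow> 'i qelem set"
  where "radical A Z i = cspan (\<Union>b\<in>arrows_into A i. act b ` Z (src b))"

lemma phii_eq: "phii A lam Z i = int (cdim (socle_preimage A lam Z i)) - int (cdim (Z i))"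
  by (simp add: phii_def socle_preimage_def)

lemma epsi_eq: "epsi A Z i = int (cdim (Z i)) - int (cdim (radical A Z i))"
  by (simp add: epsi_def radical_def)

lemma subspace_socle_preimage:
  assumes "\<And>k. Q.subspace (Z k)"
  shows "Q.subspace (socle_preimage A lam Z i)"
  using subspace_qlam[of A lam i] assms
  by (auto simp: Q.subspace_def socle_preimage_def act_add act_sc act_zero)

lemma socle_preimage_subset_span:
  fixes A :: "'i::{finite,linorder} \<Rightarrow> 'i \<Rightarrow> int"
  assumes "\<And>k. Z k \<subseteq> Q.span (B k)"
  shows "socle_preimage A lam Z i \<subseteq>
      Q.span (socle_gen i ` {..<lam i} \<union> (\<Union>b\<in>arrows_from A i. lift_arrow b ` B (tgt b)))"
    (is "_ \<subseteq> Q.span ?G")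
proof
  fix F
  assume F: "F \<in> socle_preimage A lam Z i"
  have socle_part: "(\<Sum>r<lam i. sc (F (i, r) []) (socle_gen i r)) \<in> Q.span ?G"
    by (intro Q.span_sum Q.span_scale Q.span_base) auto
  have lift_part: "(\<Sum>b\<in>arrows_from A i. lift_arrow b (act b F)) \<in> Q.span ?G"
  proof (intro Q.span_sum)
    fix b
    assume b: "b \<in> arrows_from A i"
    have "act b F \<in> Q.span (B (tgt b))"
      using F b assms by (auto simp: socle_preimage_def)
    then have "lift_arrow b (act b F) \<in> Q.span (lift_arrow b ` B (tgt b))"
      using QQ.linear_span_image[OF linear_lift_arrow] by blast
    also have "\<dots> \<subseteq> Q.span ?G"
      using b by (intro Q.span_mono) auto
    finally show "lift_arrow b (act b F) \<in> Q.span ?G" .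
  qed
  have "F \<in> qlam A lam i"
    using F by (simp add: socle_preimage_def)
  then show "F \<in> Q.span ?G"
    using Q.span_add[OF socle_part lift_part] by (subst qlam_decomposition)
qed

lemma subspace_radical: "Q.subspace (radical A Z i)"
  unfolding radical_def by (rule Q.subspace_span)

lemma radical_subset_span:
  assumes "\<And>k. Z k \<subseteq> Q.span (B k)"
  shows "radical A Z i \<subseteq> Q.span (\<Union>b\<in>arrows_into A i. act b ` B (src b))"
  unfolding radical_def
proof (intro Q.span_minimal[OF _ Q.subspace_span] UN_least)
  fix b
  assume "b \<in> arrows_into A i"
  then have "Q.span (act b ` B (src b)) \<subseteq> Q.span (\<Union>b\<in>arrows_into A i. act b ` B (src b))"
    by (intro Q.span_mono) auto
  then show "act b ` Z (src b) \<subseteq> Q.span (\<Union>b\<in>arrows_into A i. act b ` B (src b))"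
    using assms[of "src b"] QQ.linear_span_image[OF linear_act] by blast
qed

lemma radical_obtain_sum:
  fixes A :: "'i::{finite,linorder} \<Rightarrow> 'i \<Rightarrow> int"
  assumes "\<And>k. Q.subspace (Z k)" "y \<in> radical A Z i"
  obtains z where "\<forall>b\<in>arrows_into A i. z b \<in> Z (src b)"
    "y = (\<Sum>b\<in>arrows_into A i. act b (z b))"
proof -
  have "\<forall>b\<in>arrows_into A i. Q.subspace (act b ` Z (src b))"
    using QQ.linear_subspace_image[OF linear_act assms(1)] by blast
  from Q.span_UN_subspaces_obtain_sum[OF finite_arrows_into this assms(2)[unfolded radical_def]]
  obtain x where x: "\<forall>b\<in>arrows_into A i. x b \<in> act b ` Z (src b)"
      "y = (\<Sum>b\<in>arrows_into A i. x b)"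
    by blast
  have "\<forall>b\<in>arrows_into A i. \<exists>z. z \<in> Z (src b) \<and> x b = act b z"
  proof
    fix b
    assume "b \<in> arrows_into A i"
    then show "\<exists>z. z \<in> Z (src b) \<and> x b = act b z"
      using x(1) by blast
  qed
  from bchoice[OF this]
  obtain z where z: "\<forall>b\<in>arrows_into A i. z b \<in> Z (src b) \<and> x b = act b (z b)" ..
  have "y = (\<Sum>b\<in>arrows_into A i. act b (z b))"
    unfolding x(2) using z by (intro sum.cong) auto
  with z that show ?thesis
    by blast
qed

text \<open>\<open>\<complex>\<^sup>n\<close> is modelled as the sequences vanishing from \<open>n\<close> on.\<close>

definition seq_scale :: "complex \<Rightarrow> (nat \<Rightarrow> complex) \<Rightarrow> nat \<Rightarrow> complex" where
  "seq_scale c f = (\<lambda>m. c * f m)"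

interpretation S: vector_space seq_scale
  by unfold_locales (simp_all add: seq_scale_def fun_eq_iff distrib_left distrib_right)

interpretation SQ: vector_space_pair seq_scale "sc :: complex \<Rightarrow> 'i qelem \<Rightarrow> 'i qelem" ..

interpretation QS: vector_space_pair "sc :: complex \<Rightarrow> 'i qelem \<Rightarrow> 'i qelem" seq_scale ..

definition unit_seq :: "nat \<Rightarrow> nat \<Rightarrow> complex" where
  "unit_seq m = (\<lambda>k. if k = m then 1 else 0)"

lemma inj_unit_seq: "inj unit_seq"
  by (rule injI) (metis unit_seq_def zero_neq_one)

lemma sum_unit_seq_apply: "(\<Sum>m<n. seq_scale (c m) (unit_seq m)) k = (if k < n then c k else 0)"
  by (simp add: sum_fun_apply seq_scale_def unit_seq_def if_distrib[of "(*) _"] cong: if_cong)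

lemma span_unit_seq: "S.span (unit_seq ` {..<n}) = {c. \<forall>m\<ge>n. c m = 0}"
proof
  have "S.subspace {c. \<forall>m\<ge>n. c m = 0}"
    by (auto simp: S.subspace_def seq_scale_def)
  then show "S.span (unit_seq ` {..<n}) \<subseteq> {c. \<forall>m\<ge>n. c m = 0}"
    by (rule S.span_minimal[rotated]) (auto simp: unit_seq_def)
  show "{c. \<forall>m\<ge>n. c m = 0} \<subseteq> S.span (unit_seq ` {..<n})"
  proof
    fix c :: "nat \<Rightarrow> complex"
    assume "c \<in> {c. \<forall>m\<ge>n. c m = 0}"
    then have "c = (\<Sum>m<n. seq_scale (c m) (unit_seq m))"
      by (auto simp: fun_eq_iff sum_unit_seq_apply)
    also have "\<dots> \<in> S.span (unit_seq ` {..<n})"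
      by (intro S.span_sum S.span_scale S.span_base) auto
    finally show "c \<in> S.span (unit_seq ` {..<n})" .
  qed
qed

lemma dim_vanishing_from: "S.dim {c. \<forall>m\<ge>n. c m = 0} = n"
proof -
  have indep: "S.independent (unit_seq ` {..<n})"
  proof (rule S.independent_if_scalars_zero)
    fix f x
    assume sum0: "(\<Sum>x\<in>unit_seq ` {..<n}. seq_scale (f x) x) = 0" and x: "x \<in> unit_seq ` {..<n}"
    then obtain m where m: "m < n" "x = unit_seq m"
      by blast
    have "(\<Sum>x\<in>unit_seq ` {..<n}. seq_scale (f x) x) m = f x"
      using m inj_unit_seq
      by (simp add: sum.reindex inj_on_def sum_unit_seq_apply[of "f \<circ> unit_seq", simplified])
    then show "f x = 0"
      using sum0 by simp
  qed simp
  have "S.dim {c. \<forall>m\<ge>n. c m = 0} = card (unit_seq ` {..<n})"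
    unfolding span_unit_seq[symmetric] by (rule S.dim_span_eq_card_independent[OF indep])
  also have "\<dots> = n"
    using card_image[OF inj_on_subset[OF inj_unit_seq subset_UNIV]] by simp
  finally show ?thesis .
qed

section \<open>Extension by a simple module at \<open>j\<close>\<close>

text \<open>\<open>Y/X \<cong> s\<^sub>j\<close>, presented by \<open>v \<in> Y\<^sub>j\<close> and a functional \<open>l\<close> with \<open>l v = 1\<close> whose kernel on
  \<open>Y\<^sub>j\<close> is \<open>X\<^sub>j\<close>.\<close>

locale simple_extension =
  fixes A :: "'i::{finite,linorder} \<Rightarrow> 'i \<Rightarrow> int" and lam :: "'i \<Rightarrow> nat"
    and X Y :: "'i \<Rightarrow> 'i qelem set" and j :: 'i and v :: "'i qelem" and l :: "'i qelem \<Rightarrow> complex"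
  assumes cartan: "is_graph_cartan A"
    and X: "is_submodule A lam X" and X_fin: "fin_dim_module X" and Y: "is_submodule A lam Y"
    and X_sub_Y: "\<And>k. X k \<subseteq> Y k" and Y_eq_X: "\<And>k. k \<noteq> j \<Longrightarrow> Y k = X k"
    and v: "v \<in> Y j"
    and l: "Vector_Spaces.linear sc (*) l" and l_X: "\<And>x. x \<in> X j \<Longrightarrow> l x = 0"
    and l_v: "l v = 1"
    and Y_j: "\<And>y. y \<in> Y j \<Longrightarrow> y - sc (l y) v \<in> X j"
begin

lemma subspace_X: "Q.subspace (X k)" and subspace_Y: "Q.subspace (Y k)"
  and Y_qlam: "Y k \<subseteq> qlam A lam k"
  using X Y by (simp_all add: is_submodule_def)

lemma mem_X_j_iff: "y \<in> Y j \<Longrightarrow> y \<in> X j \<longleftrightarrow> l y = 0"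
  using Y_j[of y] l_X by (auto simp: l_v)

lemma obtain_spanning_sets:
  obtains BX BY where "\<And>k. X k \<subseteq> Q.span (BX k)" "\<And>k. finite (BX k)"
    "\<And>k. Y k \<subseteq> Q.span (BY k)" "\<And>k. finite (BY k)"
proof -
  obtain BX where BX: "\<And>k. finite (BX k) \<and> Q.span (BX k) = X k"
    using X_fin unfolding fin_dim_module_def by metis
  define BY where "BY k = (if k = j then insert v (BX j) else BX k)" for k
  have "Y k \<subseteq> Q.span (BY k)" for k
    using BX[of k] Y_eq_X[of k] Y_j BX[of j] by (auto simp: BY_def Q.span_insert)
  then show ?thesis
    using that[of BX BY] BX by (auto simp: BY_def)
qed

abbreviation coeffs :: "'i \<Rightarrow> (nat \<Rightarrow> complex) set" where
  "coeffs i \<equiv> {c. \<forall>m\<ge>nat (- A i j). c m = 0}"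

text \<open>The signs \<open>eps\<close> make \<open>in_comb i (out_coords i F)\<close> the part of the preprojective
  relation of \<open>F\<close> that passes through \<open>v\<close>.\<close>

definition out_coords :: "'i \<Rightarrow> 'i qelem \<Rightarrow> nat \<Rightarrow> complex" where
  "out_coords i F m = (if m < nat (- A i j) then eps (i, j, m) * l (act (i, j, m) F) else 0)"

definition in_comb :: "'i \<Rightarrow> (nat \<Rightarrow> complex) \<Rightarrow> 'i qelem" where
  "in_comb i c = (\<Sum>m<nat (- A i j). sc (c m) (act (j, i, m) v))"

lemma linear_out_coords: "Vector_Spaces.linear sc seq_scale (out_coords i)"
  unfolding Vector_Spaces.linear_iff
proof (intro conjI allI Q.vector_space_axioms S.vector_space_axioms)
  show "out_coords i (F + G) = out_coords i F + out_coords i G" for F G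
    by (simp add: out_coords_def fun_eq_iff act_add QC.linear_add[OF l] distrib_left)
  show "out_coords i (sc c F) = seq_scale c (out_coords i F)" for c F
    by (simp add: out_coords_def fun_eq_iff seq_scale_def act_sc QC.linear_scale[OF l]
        mult.left_commute)
qed

lemma linear_in_comb: "Vector_Spaces.linear seq_scale sc (in_comb i)"
  unfolding Vector_Spaces.linear_iff
proof (intro conjI allI Q.vector_space_axioms S.vector_space_axioms)
  show "in_comb i (c + d) = in_comb i c + in_comb i d" for c d
    by (simp add: in_comb_def Q.scale_left_distrib sum.distrib)
  show "in_comb i (seq_scale a c) = sc a (in_comb i c)" for a c
    by (simp add: in_comb_def seq_scale_def Q.scale_sum_right)
qed

lemma kernel_out_coords:
  "{F \<in> socle_preimage A lam Y i. out_coords i F = 0} = socle_preimage A lam X i"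
proof -
  have "F \<in> socle_preimage A lam X i \<longleftrightarrow> out_coords i F = 0"
    if F: "F \<in> socle_preimage A lam Y i" for F
  proof -
    have "act b F \<in> X (tgt b) \<longleftrightarrow> (tgt b = j \<longrightarrow> l (act b F) = 0)"
      if "b \<in> arrows_from A i" for b
      using F that Y_eq_X[of "tgt b"] mem_X_j_iff[of "act b F"]
      by (cases "tgt b = j") (auto simp: socle_preimage_def)
    then have "(\<forall>b\<in>arrows_from A i. act b F \<in> X (tgt b))
        \<longleftrightarrow> (\<forall>b\<in>{b\<in>arrows_from A i. tgt b = j}. l (act b F) = 0)"
      by blast
    also have "\<dots> \<longleftrightarrow> (\<forall>m<nat (- A i j). l (act (i, j, m) F) = 0)"
      unfolding arrows_from_to[OF cartan] by blast
    also have "\<dots> \<longleftrightarrow> out_coords i F = 0"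
      by (simp add: out_coords_def fun_eq_iff)
    finally show ?thesis
      using F by (simp add: socle_preimage_def)
  qed
  moreover have "socle_preimage A lam X i \<subseteq> socle_preimage A lam Y i"
    using X_sub_Y by (auto simp: socle_preimage_def)
  ultimately show ?thesis
    by blast
qed

lemma in_comb_out_coords_mem_radical:
  assumes F: "F \<in> socle_preimage A lam Y i"
  shows "in_comb i (out_coords i F) \<in> radical A X i"
proof -
  define rho where "rho b = act b F - (if tgt b = j then sc (l (act b F)) v else 0)" for b
  have rho_X: "rho b \<in> X (tgt b)" if "b \<in> arrows_from A i" for b
  proof -
    have "act b F \<in> Y (tgt b)"
      using F that unfolding socle_preimage_def by blast
    then show ?thesis
      using Y_j Y_eq_X[of "tgt b"] by (cases "tgt b = j") (simp_all add: rho_def)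
  qed
  define E where "E = (\<Sum>b\<in>arrows_from A i. sc (eps b) (act (rev_arrow b) (rho b)))"
  have E_radical: "E \<in> radical A X i"
    unfolding E_def radical_def
  proof (intro Q.span_sum Q.span_scale Q.span_base)
    fix b
    assume b: "b \<in> arrows_from A i"
    then have "rev_arrow b \<in> arrows_into A i" "rho b \<in> X (src (rev_arrow b))"
      using rho_X rev_arrow_mem_arrows_into[OF cartan] by simp_all
    then show "act (rev_arrow b) (rho b) \<in> (\<Union>b\<in>arrows_into A i. act b ` X (src b))"
      by blast
  qed
  have "sc (eps b) (act (rev_arrow b) (act b F)) = sc (eps b) (act (rev_arrow b) (rho b))
      + (if tgt b = j then sc (eps b * l (act b F)) (act (rev_arrow b) v) else 0)" for b
    by (simp add: rho_def act_diff act_sc act_zero Q.scale_right_diff_distrib)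
  then have "0 = E + (\<Sum>b\<in>arrows_from A i.
      if tgt b = j then sc (eps b * l (act b F)) (act (rev_arrow b) v) else 0)"
    using preprojective_relation[of F A lam i] F
    by (simp add: E_def sum.distrib socle_preimage_def)
  also have "(\<Sum>b\<in>arrows_from A i.
      if tgt b = j then sc (eps b * l (act b F)) (act (rev_arrow b) v) else 0)
      = (\<Sum>m<nat (- A i j). sc (eps (i, j, m) * l (act (i, j, m) F)) (act (j, i, m) v))"
    by (simp add: sum.inter_filter[OF finite_arrows_from, symmetric] sum_arrows_from_to[OF cartan])
  also have "\<dots> = in_comb i (out_coords i F)"
    unfolding in_comb_def out_coords_def by (intro sum.cong) simp_all
  finally have "in_comb i (out_coords i F) = - E"
    by (rule minus_unique[OF sym, symmetric])
  then show ?thesis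
    using E_radical by (simp add: radical_def Q.span_neg)
qed

lemma obtain_compatible_arrow_images:
  assumes c: "c \<in> coeffs i" and c_radical: "in_comb i c \<in> radical A X i"
  obtains h where "\<forall>b\<in>arrows_from A i. h b \<in> Y (tgt b)"
    "(\<Sum>b\<in>arrows_from A i. sc (eps b) (act (rev_arrow b) (h b))) = 0"
    "\<And>m. m < nat (- A i j) \<Longrightarrow> eps (i, j, m) * l (h (i, j, m)) = c m"
proof -
  obtain z where z: "\<forall>b\<in>arrows_into A i. z b \<in> X (src b)"
      "in_comb i c = (\<Sum>b\<in>arrows_into A i. act b (z b))"
    using radical_obtain_sum[OF subspace_X c_radical] by blast
  define h where
    "h b = sc (eps b) ((if tgt b = j then sc (c (snd (snd b))) v else 0) - z (rev_arrow b))" for b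
  have h_Y: "h b \<in> Y (tgt b)" if "b \<in> arrows_from A i" for b
  proof -
    have "z (rev_arrow b) \<in> X (tgt b)"
      using z(1) rev_arrow_mem_arrows_into[OF cartan that] by (metis src_rev_arrow)
    then have "z (rev_arrow b) \<in> Y (tgt b)"
      using X_sub_Y by blast
    moreover have "(if tgt b = j then sc (c (snd (snd b))) v else 0) \<in> Y (tgt b)"
      using v Q.subspace_scale[OF subspace_Y] Q.subspace_0[OF subspace_Y] by auto
    ultimately show ?thesis
      unfolding h_def by (intro Q.subspace_scale[OF subspace_Y] Q.subspace_diff[OF subspace_Y])
  qed
  have "sc (eps b) (act (rev_arrow b) (h b))
      = (if tgt b = j then sc (c (snd (snd b))) (act (rev_arrow b) v) else 0)
        - act (rev_arrow b) (z (rev_arrow b))" for b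
    by (simp add: h_def act_diff act_sc act_zero)
  then have rel: "(\<Sum>b\<in>arrows_from A i. sc (eps b) (act (rev_arrow b) (h b)))
      = in_comb i c - (\<Sum>b\<in>arrows_into A i. act b (z b))"
    by (simp add: sum_subtractf sum.inter_filter[OF finite_arrows_from, symmetric]
        sum_arrows_from_to[OF cartan] sum_arrows_into[OF cartan] in_comb_def)
  have coords: "eps (i, j, m) * l (h (i, j, m)) = c m" if "m < nat (- A i j)" for m
  proof -
    have "(i, j, m) \<in> arrows_from A i"
      using that arrows_from_to[OF cartan, of i j] by blast
    then have "(j, i, m) \<in> arrows_into A i"
      using rev_arrow_mem_arrows_into[OF cartan] by (metis arrow_simps(3))
    then have "z (j, i, m) \<in> X (src (j, i, m))"
      using z(1) by blast
    then have "l (z (j, i, m)) = 0"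
      using l_X by simp
    then show ?thesis
      by (simp add: h_def QC.linear_scale[OF l] QC.linear_diff[OF l] l_v mult.assoc[symmetric])
  qed
  show ?thesis
    using that[of h] h_Y rel coords z(2) by simp
qed

lemma out_coords_onto_preimage:
  assumes "c \<in> coeffs i" "in_comb i c \<in> radical A X i"
  obtains F where "F \<in> socle_preimage A lam Y i" "out_coords i F = c"
proof -
  obtain h where h_Y: "\<forall>b\<in>arrows_from A i. h b \<in> Y (tgt b)"
    and rel: "(\<Sum>b\<in>arrows_from A i. sc (eps b) (act (rev_arrow b) (h b))) = 0"
    and h_coords: "\<And>m. m < nat (- A i j) \<Longrightarrow> eps (i, j, m) * l (h (i, j, m)) = c m"
    using obtain_compatible_arrow_images[OF assms] by blast
  define F where "F = (\<Sum>b\<in>arrows_from A i. lift_arrow b (h b))"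
  have act_F: "act b F = h b" if "b \<in> arrows_from A i" for b
    using act_sum_lift_arrow[OF finite_arrows_from that] by (simp add: F_def)
  have "\<forall>b\<in>arrows_from A i. h b \<in> qlam A lam (tgt b)"
    using h_Y Y_qlam by blast
  then have "F \<in> qlam A lam i"
    unfolding F_def by (rule sum_lift_arrow_in_qlam[OF _ rel])
  then have "F \<in> socle_preimage A lam Y i"
    using act_F h_Y by (simp add: socle_preimage_def)
  moreover have "out_coords i F = c"
  proof
    fix m
    show "out_coords i F m = c m"
    proof (cases "m < nat (- A i j)")
      case True
      then have "(i, j, m) \<in> arrows_from A i"
        using arrows_from_to[OF cartan, of i j] by blast
      then show ?thesis
        using True h_coords act_F by (simp add: out_coords_def)
    next
      case False
      then show ?thesis
        using assms(1) by (simp add: out_coords_def)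
    qed
  qed
  ultimately show ?thesis
    using that by blast
qed

lemma image_out_coords:
  "out_coords i ` socle_preimage A lam Y i = {c \<in> coeffs i. in_comb i c \<in> radical A X i}"
proof
  have "out_coords i F \<in> coeffs i" for F
    by (simp add: out_coords_def)
  then show "out_coords i ` socle_preimage A lam Y i \<subseteq> {c \<in> coeffs i. in_comb i c \<in> radical A X i}"
    using in_comb_out_coords_mem_radical by blast
  show "{c \<in> coeffs i. in_comb i c \<in> radical A X i} \<subseteq> out_coords i ` socle_preimage A lam Y i"
  proof
    fix c
    assume "c \<in> {c \<in> coeffs i. in_comb i c \<in> radical A X i}"
    then obtain F where "F \<in> socle_preimage A lam Y i" "out_coords i F = c"
      using out_coords_onto_preimage by blast
    then show "c \<in> out_coords i ` socle_preimage A lam Y i"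
      by blast
  qed
qed

lemma in_comb_unit_seq:
  assumes "m < nat (- A i j)"
  shows "in_comb i (unit_seq m) = act (j, i, m) v"
proof -
  have "sc (unit_seq m k) (act (j, i, k) v) = (if k = m then act (j, i, k) v else 0)" for k
    by (simp add: unit_seq_def)
  then show ?thesis
    using assms by (simp add: in_comb_def)
qed

lemma in_comb_mem_radical: "in_comb i c \<in> radical A Y i"
  unfolding in_comb_def radical_def
proof (intro Q.span_sum Q.span_scale Q.span_base)
  fix m
  assume "m \<in> {..<nat (- A i j)}"
  then have "(i, j, m) \<in> arrows_from A i"
    using arrows_from_to[OF cartan, of i j] by blast
  then have "(j, i, m) \<in> arrows_into A i"
    using rev_arrow_mem_arrows_into[OF cartan] by (metis arrow_simps(3))
  moreover have "v \<in> Y (src (j, i, m))"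
    using v by simp
  ultimately show "act (j, i, m) v \<in> (\<Union>b\<in>arrows_into A i. act b ` Y (src b))"
    by blast
qed

lemma act_mem_span_radical_Un_in_comb:
  assumes b: "b \<in> arrows_into A i" and y: "y \<in> Y (src b)"
  shows "act b y \<in> Q.span (radical A X i \<union> in_comb i ` coeffs i)"
proof -
  have X_part: "act b x \<in> Q.span (radical A X i \<union> in_comb i ` coeffs i)" if "x \<in> X (src b)" for x
  proof -
    have "act b x \<in> radical A X i"
      unfolding radical_def using b that by (intro Q.span_base) blast
    then show ?thesis
      by (intro Q.span_base UnI1)
  qed
  show ?thesis
  proof (cases "src b = j")
    case False
    then show ?thesis
      using X_part y Y_eq_X by simp
  next
    case True
    have "rev_arrow b \<in> {b\<in>arrows_from A i. tgt b = j}"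
      using rev_arrow_mem_arrows_from[OF cartan b] True by simp
    then obtain m where m: "m < nat (- A i j)" "rev_arrow b = (i, j, m)"
      unfolding arrows_from_to[OF cartan] by blast
    then have "act b v = in_comb i (unit_seq m)"
      using in_comb_unit_seq[OF m(1)] by (metis rev_arrow_rev_arrow arrow_simps(3))
    moreover have "unit_seq m \<in> coeffs i"
      using m(1) by (simp add: unit_seq_def)
    ultimately have "act b v \<in> Q.span (radical A X i \<union> in_comb i ` coeffs i)"
      by (intro Q.span_base UnI2) simp
    moreover have "act b (y - sc (l y) v) \<in> Q.span (radical A X i \<union> in_comb i ` coeffs i)"
      using X_part Y_j y True by simp
    ultimately have "act b (y - sc (l y) v) + sc (l y) (act b v)
        \<in> Q.span (radical A X i \<union> in_comb i ` coeffs i)"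
      by (intro Q.span_add Q.span_scale)
    then show ?thesis
      by (simp add: act_diff act_sc)
  qed
qed

lemma span_radical_Un_in_comb: "Q.span (radical A X i \<union> in_comb i ` coeffs i) = radical A Y i"
proof
  have "radical A X i \<subseteq> radical A Y i"
    unfolding radical_def using X_sub_Y by (intro Q.span_mono) blast
  then show "Q.span (radical A X i \<union> in_comb i ` coeffs i) \<subseteq> radical A Y i"
    using in_comb_mem_radical by (intro Q.span_minimal[OF _ subspace_radical]) blast
  show "radical A Y i \<subseteq> Q.span (radical A X i \<union> in_comb i ` coeffs i)"
    unfolding radical_def[of A Y] using act_mem_span_radical_Un_in_comb
    by (intro Q.span_minimal[OF _ Q.subspace_span] UN_least image_subsetI)
qed

lemma dim_socle_preimage_add_dim_radical:
  "cdim (socle_preimage A lam Y i) + cdim (radical A Y i)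
    = cdim (socle_preimage A lam X i) + cdim (radical A X i) + nat (- A i j)"
proof -
  obtain BX BY where BX: "\<And>k. X k \<subseteq> Q.span (BX k)" "\<And>k. finite (BX k)"
    and BY: "\<And>k. Y k \<subseteq> Q.span (BY k)" "\<And>k. finite (BY k)"
    using obtain_spanning_sets by metis
  have "finite (socle_gen i ` {..<lam i} \<union> (\<Union>b\<in>arrows_from A i. lift_arrow b ` BY (tgt b)))"
    by (intro finite_UnI finite_imageI finite_UN_I finite_lessThan finite_arrows_from BY(2))
  from QS.dim_image_add_dim_kernel[OF linear_out_coords[of i]
      subspace_socle_preimage[where Z = Y and A = A and lam = lam and i = i, OF subspace_Y]
      socle_preimage_subset_span[where Z = Y and B = BY and A = A and lam = lam and i = i, OF BY(1)]
      this]
  have rank_out: "S.dim {c \<in> coeffs i. in_comb i c \<in> radical A X i}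
      + cdim (socle_preimage A lam X i) = cdim (socle_preimage A lam Y i)"
    by (simp add: image_out_coords kernel_out_coords)
  have C: "S.subspace (coeffs i)" "coeffs i \<subseteq> S.span (unit_seq ` {..<nat (- A i j)})"
    using S.subspace_span[of "unit_seq ` {..<nat (- A i j)}"] by (simp_all add: span_unit_seq)
  have "finite (\<Union>b\<in>arrows_into A i. act b ` BX (src b))"
    by (intro finite_imageI finite_UN_I finite_arrows_into BX(2))
  from SQ.dim_span_Un_image_add_dim_preimage[OF linear_in_comb[of i] C
      finite_imageI[OF finite_lessThan] subspace_radical radical_subset_span[where Z = X and B = BX and A = A and i = i, OF BX(1)]
      this]
  have rank_in: "cdim (radical A Y i) + S.dim {c \<in> coeffs i. in_comb i c \<in> radical A X i}
      = cdim (radical A X i) + nat (- A i j)"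
    by (simp add: span_radical_Un_in_comb dim_vanishing_from)
  from rank_out rank_in show ?thesis
    by linarith
qed

end

theorem mainTheorem5:
  fixes A :: "'i::{finite,linorder} \<Rightarrow> 'i \<Rightarrow> int"
    and lam :: "'i \<Rightarrow> nat"
    and X Y :: "'i \<Rightarrow> 'i qelem set"
    and i j :: 'i
  assumes "is_graph_cartan A"
    and "is_submodule A lam X" and "fin_dim_module X" and "nilpotent_module A X"
    and "is_submodule A lam Y"
    and "\<forall>k. X k \<subseteq> Y k"
    and "\<forall>k. k \<noteq> j \<longrightarrow> Y k = X k"
    and "cdim (Y j) = cdim (X j) + 1"
  shows "phii A lam Y i - epsi A Y i = phii A lam X i - epsi A X i - A i j"
proof -
  obtain B where "finite B" "Q.span B = X j"
    using assms(3) unfolding fin_dim_module_def by blast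
  then have B: "X j \<subseteq> Q.span B" "finite B"
    by simp_all
  have X_j: "Q.subspace (X j)"
    using assms(2) by (simp add: is_submodule_def)
  obtain v l where "v \<in> Y j" "Vector_Spaces.linear sc (*) l" "\<forall>x\<in>X j. l x = 0" "l v = 1"
      "\<forall>y\<in>Y j. y - sc (l y) v \<in> X j"
    using Q.obtain_functional_codim_one[OF X_j B assms(6)[rule_format] assms(8)] by blast
  then interpret simple_extension A lam X Y j v l
    using assms unfolding simple_extension_def by simp
  define d :: int where "d = (if i = j then 1 else 0)"
  have "int (cdim (Y i)) = int (cdim (X i)) + d"
    using assms(7,8) by (auto simp: d_def)
  moreover have "int (nat (- A i j)) = - A i j + 2 * d"
    using assms(1) by (auto simp: is_graph_cartan_def d_def)
  ultimately show ?thesis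
    using dim_socle_preimage_add_dim_radical[of i] unfolding phii_eq epsi_eq by linarith
qed

end
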